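(* Assume that the covector $p_a$ satisfies $p_ap^a+\sigma u_au^a=0$ where $\sigma=\sigma_+$ or $\sigma=\sigma_-$. Then the eigenvalues (roots of the characteristic polynomial, counted with multiplicity) of the linear map $\mathcal{M}_b{}^d$ are $\lambda_1=\lambda_2=0$, $$\lambda_3=2\mathcal{L}_F\sigma\,u_au^a,\qquad \lambda_4=\big(4\mathcal{L}_F\sigma-4\mathcal{L}_{FF}+4\mathcal{L}_{FG}G\sigma-\mathcal{L}_{GG}(1+F\sigma)\big)u_au^a .$$
   Context: Let $F_{ab}$ be an antisymmetric tensor on an oriented 4-dimensional Lorentzian manifold with metric $g_{ab}$ (signature $(-,+,+,+)$; indices moved with $g$), $\varepsilon_{abcd}$ the volume form, ${}^{*}F_{ab}=\frac12\varepsilon_{abcd}F^{cd}$, $F=\frac12F_{ab}F^{ab}$, $G=-\frac14F_{ab}{}^{*}F^{ab}$. Let $\mathcal{L}(F,G)$ be smooth with partial derivatives $\mathcal{L}_F,\mathcal{L}_{FF},\mathcal{L}_{FG},\mathcal{L}_{GG}$ evaluated at the background invariants. $P=\mathcal{L}_{FF}\mathcal{L}_{GG}-\mathcal{L}_{FG}^2$, $M=\mathcal{L}_F^2+2\mathcal{L}_F\mathcal{L}_{FG}G-\frac12\mathcal{L}_F\mathcal{L}_{GG}F-PG^2$, $N=2\mathcal{L}_F\mathcal{L}_{FF}+\frac12\mathcal{L}_F\mathcal{L}_{GG}-PF$, $\sigma_\pm=\frac{N}{2M}\pm\sqrt{\frac{N^2}{4M^2}-\frac{P}{M}}$. Standing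 assumptions: $\mathcal{L}_F\neq0$, $M\neq0$, $1+\sigma_\pm F-\sigma_\pm^2G^2\neq0$. For a nonzero covector $p_a$ put $u_a=F_{ab}p^b$, $v_a={}^{*}F_{ab}p^b$ and $\mathcal{M}_b{}^d=-2\mathcal{L}_Fp_ap^a\delta_b^d+2\mathcal{L}_Fp_bp^d-4\mathcal{L}_{FF}u_bu^d+2\mathcal{L}_{FG}(u_bv^d+v_bu^d)-\mathcal{L}_{GG}v_bv^d$. *)

theory Defs
  imports Complex_Main "Jordan_Normal_Form.Char_Poly"
begin

text \<open>Tensor components are taken w.r.t. an
arbitrary basis of the 4-dimensional tangent space at the point; indices range over
0..3. gl = g_ab, gu = g^ab (the inverse metric).\<close>

definition eta4 :: "nat \<Rightarrow> nat \<Rightarrow> real" where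
  "eta4 i j = (if i = j then (if i = 0 then -1 else 1) else 0)"

definition lorentzian :: "(nat \<Rightarrow> nat \<Rightarrow> real) \<Rightarrow> bool" where
  "lorentzian gl \<longleftrightarrow> (\<forall>a<4. \<forall>b<4. gl a b = gl b a) \<and>
     (\<exists>e :: nat \<Rightarrow> nat \<Rightarrow> real. \<forall>i<4. \<forall>j<4.
        (\<Sum>a<4. \<Sum>b<4. e i a * e j b * gl a b) = eta4 i j)"

definition is_inverse_metric :: "(nat \<Rightarrow> nat \<Rightarrow> real) \<Rightarrow> (nat \<Rightarrow> nat \<Rightarrow> real) \<Rightarrow> bool" where
  "is_inverse_metric gl gu \<longleftrightarrow>
     (\<forall>a<4. \<forall>b<4. (\<Sum>c<4. gl a c * gu c b) = (if a = b then 1 else 0))"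

text \<open>Levi-Civita symbol [abcd], with [0123] = 1.\<close>
definition levi_civita :: "nat \<Rightarrow> nat \<Rightarrow> nat \<Rightarrow> nat \<Rightarrow> real" where
  "levi_civita a b c d =
     sgn (real b - real a) * sgn (real c - real a) * sgn (real d - real a) *
     sgn (real c - real b) * sgn (real d - real b) * sgn (real d - real c)"

definition metric_det :: "(nat \<Rightarrow> nat \<Rightarrow> real) \<Rightarrow> real" where
  "metric_det gl = det (mat 4 4 (\<lambda>(a, b). gl a b))"

text \<open>Volume form of the orientation s (s = 1 or s = -1):
  eps_abcd = s * sqrt(-det g) * [abcd].\<close>
definition vol_form :: "real \<Rightarrow> (nat \<Rightarrow> nat \<Rightarrow> real) \<Rightarrow> nat \<Rightarrow> nat \<Rightarrow> nat \<Rightarrow> nat \<Rightarrow> real" where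
  "vol_form s gl a b c d = s * sqrt (- metric_det gl) * levi_civita a b c d"

definition raise1 :: "(nat \<Rightarrow> nat \<Rightarrow> real) \<Rightarrow> (nat \<Rightarrow> real) \<Rightarrow> nat \<Rightarrow> real" where
  "raise1 gu X a = (\<Sum>b<4. gu a b * X b)"

definition raise2 :: "(nat \<Rightarrow> nat \<Rightarrow> real) \<Rightarrow> (nat \<Rightarrow> nat \<Rightarrow> real) \<Rightarrow> nat \<Rightarrow> nat \<Rightarrow> real" where
  "raise2 gu T a b = (\<Sum>c<4. \<Sum>d<4. gu a c * gu b d * T c d)"

definition hodge :: "real \<Rightarrow> (nat \<Rightarrow> nat \<Rightarrow> real) \<Rightarrow> (nat \<Rightarrow> nat \<Rightarrow> real)
    \<Rightarrow> (nat \<Rightarrow> nat \<Rightarrow> real) \<Rightarrow> nat \<Rightarrow> nat \<Rightarrow> real" where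
  "hodge s gl gu Fl a b = (1/2) * (\<Sum>c<4. \<Sum>d<4. vol_form s gl a b c d * raise2 gu Fl c d)"

definition invF :: "(nat \<Rightarrow> nat \<Rightarrow> real) \<Rightarrow> (nat \<Rightarrow> nat \<Rightarrow> real) \<Rightarrow> real" where
  "invF gu Fl = (1/2) * (\<Sum>a<4. \<Sum>b<4. Fl a b * raise2 gu Fl a b)"

definition invG :: "real \<Rightarrow> (nat \<Rightarrow> nat \<Rightarrow> real) \<Rightarrow> (nat \<Rightarrow> nat \<Rightarrow> real)
    \<Rightarrow> (nat \<Rightarrow> nat \<Rightarrow> real) \<Rightarrow> real" where
  "invG s gl gu Fl = - (1/4) * (\<Sum>a<4. \<Sum>b<4. Fl a b * raise2 gu (hodge s gl gu Fl) a b)"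

definition contr :: "(nat \<Rightarrow> nat \<Rightarrow> real) \<Rightarrow> (nat \<Rightarrow> real) \<Rightarrow> (nat \<Rightarrow> real) \<Rightarrow> real" where
  "contr gu X Y = (\<Sum>a<4. X a * raise1 gu Y a)"

definition uvec :: "(nat \<Rightarrow> nat \<Rightarrow> real) \<Rightarrow> (nat \<Rightarrow> nat \<Rightarrow> real) \<Rightarrow> (nat \<Rightarrow> real) \<Rightarrow> nat \<Rightarrow> real" where
  "uvec gu Fl p a = (\<Sum>b<4. Fl a b * raise1 gu p b)"

definition vvec :: "real \<Rightarrow> (nat \<Rightarrow> nat \<Rightarrow> real) \<Rightarrow> (nat \<Rightarrow> nat \<Rightarrow> real)
    \<Rightarrow> (nat \<Rightarrow> nat \<Rightarrow> real) \<Rightarrow> (nat \<Rightarrow> real) \<Rightarrow> nat \<Rightarrow> real" where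
  "vvec s gl gu Fl p a = (\<Sum>b<4. hodge s gl gu Fl a b * raise1 gu p b)"

text \<open>The linear map M_b^d as a 4x4 matrix (row b, column d).\<close>
definition Mmap :: "real \<Rightarrow> real \<Rightarrow> real \<Rightarrow> real \<Rightarrow> real \<Rightarrow> (nat \<Rightarrow> nat \<Rightarrow> real)
    \<Rightarrow> (nat \<Rightarrow> nat \<Rightarrow> real) \<Rightarrow> (nat \<Rightarrow> nat \<Rightarrow> real) \<Rightarrow> (nat \<Rightarrow> real) \<Rightarrow> real mat" where
  "Mmap LF LFF LFG LGG s gl gu Fl p =
     (let u = uvec gu Fl p; v = vvec s gl gu Fl p;
          pu = raise1 gu p; uu = raise1 gu u; vu = raise1 gu v
      in mat 4 4 (\<lambda>(b, d).
          - 2 * LF * contr gu p p * (if b = d then 1 else 0)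
          + 2 * LF * p b * pu d
          - 4 * LFF * u b * uu d
          + 2 * LFG * (u b * vu d + v b * uu d)
          - LGG * v b * vu d))"

text \<open>The coefficients P, M, N and the two roots sigma_+ / sigma_-, taken in
the complex numbers (so that sigma is defined even if the discriminant is negative).\<close>
definition Pco :: "real \<Rightarrow> real \<Rightarrow> real \<Rightarrow> real" where
  "Pco LFF LFG LGG = LFF * LGG - LFG\<^sup>2"

definition Mco :: "real \<Rightarrow> real \<Rightarrow> real \<Rightarrow> real \<Rightarrow> real \<Rightarrow> real \<Rightarrow> real" where
  "Mco LF LFF LFG LGG F G =
     LF\<^sup>2 + 2 * LF * LFG * G - (1/2) * LF * LGG * F - Pco LFF LFG LGG * G\<^sup>2"

definition Nco :: "real \<Rightarrow> real \<Rightarrow> real \<Rightarrow> real \<Rightarrow> real \<Rightarrow> real" where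
  "Nco LF LFF LFG LGG F = 2 * LF * LFF + (1/2) * LF * LGG - Pco LFF LFG LGG * F"

definition sigma_pm :: "real \<Rightarrow> real \<Rightarrow> real \<Rightarrow> real \<Rightarrow> real \<Rightarrow> real \<Rightarrow> real \<Rightarrow> complex" where
  "sigma_pm e LF LFF LFG LGG F G =
     (let M = complex_of_real (Mco LF LFF LFG LGG F G);
          N = complex_of_real (Nco LF LFF LFG LGG F);
          P = complex_of_real (Pco LFF LFG LGG)
      in N / (2 * M) + complex_of_real e * csqrt (N\<^sup>2 / (4 * M\<^sup>2) - P / M))"

end

theory Submission
  imports Defs
begin

text \<open>Since \<open>u = F p\<close> and \<open>v = *F p\<close> are orthogonal to \<open>p\<close>, the map \<open>\<M>\<close> is
  \<open>-2 L\<^sub>F (p\<cdot>p)\<close> times the identity plus a map of rank at most three with image spanned by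
  \<open>p, u, v\<close>. Sylvester's determinant identity reduces its characteristic polynomial to that
  of a \<open>3\<times>3\<close> matrix of contractions, block diagonal because of the orthogonality. The duality
  identities \<open>F *F = -G g\<close> and \<open>*F *F = F F - F g\<close>, contracted with \<open>p\<close>, give
  \<open>u\<cdot>v = -G p\<cdot>p\<close> and \<open>v\<cdot>v = u\<cdot>u - F p\<cdot>p\<close>. With the dispersion relation
  \<open>p\<cdot>p = -\<sigma> u\<cdot>u\<close>, the constant term of the remaining quadratic factor is a multiple of
  \<open>M\<sigma>\<^sup>2 - N\<sigma> + P\<close>, which vanishes for \<open>\<sigma> = \<sigma>\<^sub>\<plusminus>\<close>.\<close>

section \<open>Finite sums and determinants\<close>

lemma sum_lessThan_4: "(\<Sum>i<4::nat. f i) = f 0 + f 1 + f 2 + f 3"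
  by (simp add: eval_nat_numeral)

lemma sum_lessThan_3: "(\<Sum>i<3::nat. f i) = f 0 + f 1 + f 2"
  by (simp add: eval_nat_numeral)

lemma sum_rotate3:
  "(\<Sum>m\<in>I. \<Sum>n\<in>J. \<Sum>g\<in>K. F m n g) = (\<Sum>g\<in>K. \<Sum>m\<in>I. \<Sum>n\<in>J. F m n g)"
  by (subst sum.swap) (simp add: sum.swap[of _ J])

lemma sum_swap_pairs:
  "(\<Sum>m\<in>I. \<Sum>n\<in>J. \<Sum>g\<in>K. \<Sum>h\<in>L. F m n g h) = (\<Sum>g\<in>K. \<Sum>h\<in>L. \<Sum>m\<in>I. \<Sum>n\<in>J. F m n g h)"
  by (simp add: sum_rotate3[of _ J] sum_rotate3[of _ I])

lemma det_mat_Suc: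
  "det (mat (Suc n) (Suc n) f) = (\<Sum>i<Suc n. f (i, 0) * (-1)^i *
     det (mat n n (\<lambda>(i', j'). f (if i' < i then i' else Suc i', Suc j'))))"
proof -
  have "det (mat (Suc n) (Suc n) f)
      = (\<Sum>i<Suc n. mat (Suc n) (Suc n) f $$ (i, 0) * cofactor (mat (Suc n) (Suc n) f) i 0)"
    by (rule laplace_expansion_column) auto
  also have "\<dots> = (\<Sum>i<Suc n. f (i, 0) * (-1)^i *
     det (mat n n (\<lambda>(i', j'). f (if i' < i then i' else Suc i', Suc j'))))"
  proof (rule sum.cong[OF refl])
    fix i assume i: "i \<in> {..<Suc n}"
    have "mat_delete (mat (Suc n) (Suc n) f) i 0
        = mat n n (\<lambda>(i', j'). f (if i' < i then i' else Suc i', Suc j'))"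
      unfolding mat_delete_def by (rule eq_matI) auto
    then show "mat (Suc n) (Suc n) f $$ (i, 0) * cofactor (mat (Suc n) (Suc n) f) i 0
        = f (i, 0) * (-1)^i * det (mat n n (\<lambda>(i', j'). f (if i' < i then i' else Suc i', Suc j')))"
      using i unfolding cofactor_def by (simp add: mult.assoc)
  qed
  finally show ?thesis .
qed

lemma det_mat_3:
  "det (mat 3 3 (\<lambda>(i, j). Y i j)) = Y 0 0 * (Y 1 1 * Y 2 2 - Y 1 2 * Y 2 1)
     - Y 0 1 * (Y 1 0 * Y 2 2 - Y 1 2 * Y 2 0) + Y 0 2 * (Y 1 0 * Y 2 1 - Y 1 1 * Y 2 0)"
  by (simp add: det_mat_Suc eval_nat_numeral algebra_simps)

lemma det_scalar_minus_block_diag3: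
  "det (y \<cdot>\<^sub>m 1\<^sub>m 3 - mat 3 3 (\<lambda>(i, j). [[a, 0, 0], [0, b, c], [0, d, f]] ! i ! j))
    = (y - a) * ((y - b) * (y - f) - c * d)"
proof -
  have "y \<cdot>\<^sub>m 1\<^sub>m 3 - mat 3 3 (\<lambda>(i, j). [[a, 0, 0], [0, b, c], [0, d, f]] ! i ! j)
      = mat 3 3 (\<lambda>(i, j). (if i = j then y else 0) - [[a, 0, 0], [0, b, c], [0, d, f]] ! i ! j)"
    by (rule eq_matI) auto
  then show ?thesis by (simp add: det_mat_3 algebra_simps)
qed

definition perm_alt_sum4 :: "(nat \<Rightarrow> nat \<Rightarrow> nat \<Rightarrow> nat \<Rightarrow> 'a::comm_ring_1) \<Rightarrow> 'a" where
  "perm_alt_sum4 Y =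
     Y 0 1 2 3 - Y 0 1 3 2 - Y 0 2 1 3 + Y 0 2 3 1 + Y 0 3 1 2 - Y 0 3 2 1
   - Y 1 0 2 3 + Y 1 0 3 2 + Y 1 2 0 3 - Y 1 2 3 0 - Y 1 3 0 2 + Y 1 3 2 0
   + Y 2 0 1 3 - Y 2 0 3 1 - Y 2 1 0 3 + Y 2 1 3 0 + Y 2 3 0 1 - Y 2 3 1 0
   - Y 3 0 1 2 + Y 3 0 2 1 + Y 3 1 0 2 - Y 3 1 2 0 - Y 3 2 0 1 + Y 3 2 1 0"

lemma det_mat_4:
  "det (mat 4 4 (\<lambda>(i, j). X i j)) = perm_alt_sum4 (\<lambda>a b c d. X 0 a * X 1 b * X 2 c * X 3 d)"
  unfolding perm_alt_sum4_def by (simp add: det_mat_Suc eval_nat_numeral algebra_simps)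

lemma det_four_block_eq_det_AK:
  fixes A K :: "'a::field mat"
  assumes A: "A \<in> carrier_mat n m" and K: "K \<in> carrier_mat m n"
  shows "det (four_block_mat (X \<cdot>\<^sub>m 1\<^sub>m n) A K (1\<^sub>m m)) = det (X \<cdot>\<^sub>m 1\<^sub>m n - A * K)"
proof -
  define L where "L = four_block_mat (1\<^sub>m n) (- A) (0\<^sub>m m n) (1\<^sub>m m)"
  have "L * four_block_mat (X \<cdot>\<^sub>m 1\<^sub>m n) A K (1\<^sub>m m)
      = four_block_mat (1\<^sub>m n * (X \<cdot>\<^sub>m 1\<^sub>m n) + (- A) * K) (1\<^sub>m n * A + (- A) * 1\<^sub>m m)
          (0\<^sub>m m n * (X \<cdot>\<^sub>m 1\<^sub>m n) + 1\<^sub>m m * K) (0\<^sub>m m n * A + 1\<^sub>m m * 1\<^sub>m m)"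
    unfolding L_def by (rule mult_four_block_mat) (use A K in auto)
  also have "\<dots> = four_block_mat (X \<cdot>\<^sub>m 1\<^sub>m n - A * K) (0\<^sub>m n m) K (1\<^sub>m m)"
  proof (rule cong_four_block_mat)
    show "1\<^sub>m n * (X \<cdot>\<^sub>m 1\<^sub>m n) + - A * K = X \<cdot>\<^sub>m 1\<^sub>m n - A * K"
      using A K minus_add_uminus_mat[of "X \<cdot>\<^sub>m 1\<^sub>m n" n n "A * K"] by (simp add: uminus_mult_left_mat)
    show "1\<^sub>m n * A + - A * 1\<^sub>m m = 0\<^sub>m n m"
      by (rule eq_matI) (use A K in auto)
  qed (use A K in auto)
  finally have LB: "L * four_block_mat (X \<cdot>\<^sub>m 1\<^sub>m n) A K (1\<^sub>m m) = four_block_mat (X \<cdot>\<^sub>m 1\<^sub>m n - A * K) (0\<^sub>m n m) K (1\<^sub>m m)" .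
  have "det (L * four_block_mat (X \<cdot>\<^sub>m 1\<^sub>m n) A K (1\<^sub>m m)) = det (X \<cdot>\<^sub>m 1\<^sub>m n - A * K)"
    unfolding LB by (subst det_four_block_mat_upper_right_zero[of _ n _ m]) (use A K in auto)
  moreover have "det L = 1"
    unfolding L_def by (subst det_four_block_mat_lower_left_zero[of _ n _ m]) (use A K in auto)
  moreover have "det (L * four_block_mat (X \<cdot>\<^sub>m 1\<^sub>m n) A K (1\<^sub>m m))
      = det L * det (four_block_mat (X \<cdot>\<^sub>m 1\<^sub>m n) A K (1\<^sub>m m))"
    by (rule det_mult[of _ "n + m"]) (use A K in \<open>auto simp: L_def\<close>)
  ultimately show ?thesis by simp
qed

lemma det_four_block_eq_det_KA:
  fixes A K :: "'a::field mat"
  assumes A: "A \<in> carrier_mat n m" and K: "K \<in> carrier_mat m n"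
  shows "X^m * det (four_block_mat (X \<cdot>\<^sub>m 1\<^sub>m n) A K (1\<^sub>m m)) = X^n * det (X \<cdot>\<^sub>m 1\<^sub>m m - K * A)"
proof -
  define L where "L = four_block_mat (1\<^sub>m n) (0\<^sub>m n m) (- K) (X \<cdot>\<^sub>m 1\<^sub>m m)"
  have "L * four_block_mat (X \<cdot>\<^sub>m 1\<^sub>m n) A K (1\<^sub>m m)
      = four_block_mat (1\<^sub>m n * (X \<cdot>\<^sub>m 1\<^sub>m n) + 0\<^sub>m n m * K) (1\<^sub>m n * A + 0\<^sub>m n m * 1\<^sub>m m)
          ((- K) * (X \<cdot>\<^sub>m 1\<^sub>m n) + (X \<cdot>\<^sub>m 1\<^sub>m m) * K) ((- K) * A + (X \<cdot>\<^sub>m 1\<^sub>m m) * 1\<^sub>m m)"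
    unfolding L_def by (rule mult_four_block_mat) (use A K in auto)
  also have "\<dots> = four_block_mat (X \<cdot>\<^sub>m 1\<^sub>m n) A (0\<^sub>m m n) (X \<cdot>\<^sub>m 1\<^sub>m m - K * A)"
  proof (rule cong_four_block_mat)
    show "(- K) * (X \<cdot>\<^sub>m 1\<^sub>m n) + (X \<cdot>\<^sub>m 1\<^sub>m m) * K = 0\<^sub>m m n"
      by (rule eq_matI) (use A K in \<open>auto simp: scalar_prod_def if_distrib if_distribR sum.delta sum.delta' cong: if_cong\<close>)
    show "(- K) * A + (X \<cdot>\<^sub>m 1\<^sub>m m) * 1\<^sub>m m = X \<cdot>\<^sub>m 1\<^sub>m m - K * A"
      by (rule eq_matI) (use A K in auto)
  qed (use A K in auto)
  finally have LB: "L * four_block_mat (X \<cdot>\<^sub>m 1\<^sub>m n) A K (1\<^sub>m m) = four_block_mat (X \<cdot>\<^sub>m 1\<^sub>m n) A (0\<^sub>m m n) (X \<cdot>\<^sub>m 1\<^sub>m m - K * A)" .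
  have "det (L * four_block_mat (X \<cdot>\<^sub>m 1\<^sub>m n) A K (1\<^sub>m m)) = X^n * det (X \<cdot>\<^sub>m 1\<^sub>m m - K * A)"
    unfolding LB by (subst det_four_block_mat_lower_left_zero[of _ n _ m]) (use A K in auto)
  moreover have "det L = X^m"
    unfolding L_def by (subst det_four_block_mat_upper_right_zero[of _ n _ m]) (use A K in auto)
  moreover have "det (L * four_block_mat (X \<cdot>\<^sub>m 1\<^sub>m n) A K (1\<^sub>m m))
      = det L * det (four_block_mat (X \<cdot>\<^sub>m 1\<^sub>m n) A K (1\<^sub>m m))"
    by (rule det_mult[of _ "n + m"]) (use A K in \<open>auto simp: L_def\<close>)
  ultimately show ?thesis by simp
qed

lemma det_sylvester:
  fixes A K :: "'a::field mat"
  assumes "A \<in> carrier_mat n m" and "K \<in> carrier_mat m n"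
  shows "X^m * det (X \<cdot>\<^sub>m 1\<^sub>m n - A * K) = X^n * det (X \<cdot>\<^sub>m 1\<^sub>m m - K * A)"
  using det_four_block_eq_det_AK[OF assms] det_four_block_eq_det_KA[OF assms] by simp

lemma det_scalar_plus_low_rank:
  fixes A K :: "'a::field mat"
  assumes A: "A \<in> carrier_mat n m" and K: "K \<in> carrier_mat m n" and "x \<noteq> c" and "m \<le> n"
  shows "det (x \<cdot>\<^sub>m 1\<^sub>m n - (c \<cdot>\<^sub>m 1\<^sub>m n + A * K)) = (x - c)^(n - m) * det ((x - c) \<cdot>\<^sub>m 1\<^sub>m m - K * A)"
proof -
  have shift: "x \<cdot>\<^sub>m 1\<^sub>m n - (c \<cdot>\<^sub>m 1\<^sub>m n + A * K) = (x - c) \<cdot>\<^sub>m 1\<^sub>m n - A * K"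
    by (rule eq_matI) (use A K in \<open>auto simp: algebra_simps\<close>)
  have "(x - c)^m * det ((x - c) \<cdot>\<^sub>m 1\<^sub>m n - A * K)
      = (x - c)^m * ((x - c)^(n - m) * det ((x - c) \<cdot>\<^sub>m 1\<^sub>m m - K * A))"
    using det_sylvester[OF A K, of "x - c"] \<open>m \<le> n\<close> by (simp add: power_add[symmetric])
  then show ?thesis
    unfolding shift using \<open>x \<noteq> c\<close> by simp
qed

lemma poly_char_poly_det:
  fixes A :: "'a::field mat"
  assumes "A \<in> carrier_mat n n"
  shows "poly (char_poly A) x = det (x \<cdot>\<^sub>m 1\<^sub>m n - A)"
proof -
  have "- char_matrix A x = x \<cdot>\<^sub>m 1\<^sub>m n - A"
    by (rule eq_matI) (use assms in \<open>auto simp: char_matrix_def\<close>)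
  then show ?thesis using char_poly_matrix[OF assms, of x] by simp
qed

lemma poly_eqI_cofinite:
  fixes p q :: "'a::{idom, ring_char_0} poly"
  assumes "\<And>x. x \<noteq> c \<Longrightarrow> poly p x = poly q x"
  shows "p = q"
proof (rule ccontr)
  assume "p \<noteq> q"
  then have "finite {x. poly (p - q) x = 0}" by (intro poly_roots_finite) simp
  moreover have "UNIV - {c} \<subseteq> {x. poly (p - q) x = 0}" using assms by auto
  ultimately have "finite (UNIV :: 'a set)" by (metis finite_Diff2 finite.emptyI finite_insert finite_subset)
  then show False using infinite_UNIV_char_0 by blast
qed

section \<open>The Levi-Civita symbol\<close>

lemma sum_levi_civita:
  "(\<Sum>a<4. \<Sum>b<4. \<Sum>c<4. \<Sum>d<4. levi_civita a b c d * Y a b c d) = perm_alt_sum4 Y"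
  unfolding sum_lessThan_4 perm_alt_sum4_def by (simp add: levi_civita_def)

lemma levi_civita_transform:
  fixes A :: "nat \<Rightarrow> nat \<Rightarrow> real"
  assumes "a < 4" "b < 4" "c < 4" "d < 4"
  shows "(\<Sum>e<4. \<Sum>f<4. \<Sum>g<4. \<Sum>h<4. levi_civita e f g h * (A a e * A b f * A c g * A d h))
     = det (mat 4 4 (\<lambda>(i, j). A i j)) * levi_civita a b c d"
proof -
  have "a = 0 \<or> a = 1 \<or> a = 2 \<or> a = 3" "b = 0 \<or> b = 1 \<or> b = 2 \<or> b = 3"
    "c = 0 \<or> c = 1 \<or> c = 2 \<or> c = 3" "d = 0 \<or> d = 1 \<or> d = 2 \<or> d = 3"
    using assms by auto
  then show ?thesis
    unfolding sum_levi_civita det_mat_4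
    by (elim disjE; simp add: perm_alt_sum4_def levi_civita_def; algebra)
qed

lemma levi_civita_swap12: "levi_civita b a c d = - levi_civita a b c d"
proof -
  have "sgn (real a - real b) = - sgn (real b - real a)" by (simp add: sgn_minus[symmetric])
  then show ?thesis unfolding levi_civita_def by (simp add: mult_ac)
qed

definition sym4 :: "(nat \<Rightarrow> nat \<Rightarrow> real) \<Rightarrow> bool" where
  "sym4 X \<longleftrightarrow> (\<forall>a<4. \<forall>b<4. X a b = X b a)"

definition antisym4 :: "(nat \<Rightarrow> nat \<Rightarrow> real) \<Rightarrow> bool" where
  "antisym4 X \<longleftrightarrow> (\<forall>a<4. \<forall>b<4. X a b = - X b a)"

lemma antisym4_entries:
  assumes "antisym4 X"
  shows "X 0 0 = 0" "X 1 1 = 0" "X 2 2 = 0" "X 3 3 = 0"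
    "X 1 0 = - X 0 1" "X 2 0 = - X 0 2" "X 3 0 = - X 0 3"
    "X 2 1 = - X 1 2" "X 3 1 = - X 1 3" "X 3 2 = - X 2 3"
proof -
  have h: "X a b = - X b a" if "a < 4" "b < 4" for a b
    using assms that unfolding antisym4_def by blast
  show "X 0 0 = 0" "X 1 1 = 0" "X 2 2 = 0" "X 3 3 = 0"
    using h[of 0 0] h[of 1 1] h[of 2 2] h[of 3 3] by simp_all
  show "X 1 0 = - X 0 1" "X 2 0 = - X 0 2" "X 3 0 = - X 0 3"
    "X 2 1 = - X 1 2" "X 3 1 = - X 1 3" "X 3 2 = - X 2 3"
    using h[of 1 0] h[of 2 0] h[of 3 0] h[of 2 1] h[of 3 1] h[of 3 2] by simp_all
qed

lemma antisym4_quadratic_form: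
  assumes "antisym4 X"
  shows "(\<Sum>a<4. (\<Sum>b<4. X a b * q b) * q a) = 0"
  unfolding sum_lessThan_4 antisym4_entries[OF assms] by (simp add: algebra_simps)

lemma levi_civita_dual_contraction:
  assumes "antisym4 X"
  shows "4 * (\<Sum>a<4. (\<Sum>b<4. \<Sum>c<4. \<Sum>d<4. levi_civita a b c d * X c d * q b) * (\<Sum>e<4. X a e * p e))
    = (\<Sum>a<4. \<Sum>b<4. \<Sum>c<4. \<Sum>d<4. levi_civita a b c d * X a b * X c d) * (\<Sum>a<4. p a * q a)"
  unfolding sum_lessThan_4 antisym4_entries[OF assms]
  by (simp add: levi_civita_def algebra_simps)

lemma levi_civita_double_dual_contraction:
  assumes "antisym4 X" "antisym4 Y"
  shows "- (\<Sum>a<4. (\<Sum>b<4. \<Sum>c<4. \<Sum>d<4. levi_civita a b c d * X c d * q b)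
              * (\<Sum>e<4. \<Sum>g<4. \<Sum>h<4. levi_civita a e g h * Y g h * p e))
    = 4 * (\<Sum>a<4. (\<Sum>b<4. Y a b * q b) * (\<Sum>c<4. X a c * p c))
      - 2 * (\<Sum>a<4. \<Sum>b<4. Y a b * X a b) * (\<Sum>a<4. p a * q a)"
  unfolding sum_lessThan_4 antisym4_entries[OF assms(1)] antisym4_entries[OF assms(2)]
  by (simp add: levi_civita_def) (simp add: algebra_simps)

section \<open>The metric and its inverse\<close>

lemma inverse_metric_mat:
  assumes "is_inverse_metric gl gu"
  shows "mat 4 4 (\<lambda>(i, j). gl i j) * mat 4 4 (\<lambda>(i, j). gu i j) = 1\<^sub>m 4"
  by (rule eq_matI) (use assms in \<open>auto simp: scalar_prod_def atLeast0LessThan is_inverse_metric_def\<close>)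

lemma metric_det_inverse:
  assumes "is_inverse_metric gl gu"
  shows "metric_det gl * det (mat 4 4 (\<lambda>(i, j). gu i j)) = 1"
  using det_mult[of "mat 4 4 (\<lambda>(i, j). gl i j)" 4 "mat 4 4 (\<lambda>(i, j). gu i j)"]
  unfolding metric_det_def inverse_metric_mat[OF assms] by simp

lemma inverse_metric_sym:
  assumes lor: "lorentzian gl" and inv: "is_inverse_metric gl gu"
  shows "sym4 gu"
proof -
  define Gl where "Gl = mat 4 4 (\<lambda>(i, j). gl i j)"
  define Gu where "Gu = mat 4 4 (\<lambda>(i, j). gu i j)"
  have cGl: "Gl \<in> carrier_mat 4 4" and cGu: "Gu \<in> carrier_mat 4 4" unfolding Gl_def Gu_def by auto
  have GlGu: "Gl * Gu = 1\<^sub>m 4" unfolding Gl_def Gu_def by (rule inverse_metric_mat[OF inv])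
  have GlT: "Gl\<^sup>T = Gl"
    unfolding Gl_def by (rule eq_matI) (use lor in \<open>auto simp: lorentzian_def\<close>)
  have "Gu\<^sup>T = Gu\<^sup>T * (Gl * Gu)" using GlGu cGu by simp
  also have "\<dots> = (Gl * Gu)\<^sup>T * Gu"
    using cGu cGl by (simp add: assoc_mult_mat transpose_mult[OF cGl cGu] GlT)
  also have "\<dots> = Gu" using GlGu cGu by simp
  finally have GuT: "Gu\<^sup>T = Gu" .
  have "gu a b = gu b a" if "a < 4" "b < 4" for a b
    using arg_cong[OF GuT, of "\<lambda>M. M $$ (b, a)"] that unfolding Gu_def by simp
  then show ?thesis unfolding sym4_def by blast
qed

lemma lorentzian_metric_det_neg:
  assumes "lorentzian gl"
  shows "metric_det gl < 0"
proof -
  obtain e :: "nat \<Rightarrow> nat \<Rightarrow> real" where e: "\<forall>i<4. \<forall>j<4.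
      (\<Sum>a<4. \<Sum>b<4. e i a * e j b * gl a b) = eta4 i j"
    using assms unfolding lorentzian_def by blast
  define Gl where "Gl = mat 4 4 (\<lambda>(i, j). gl i j)"
  define E where "E = mat 4 4 (\<lambda>(i, j). e i j)"
  have cE: "E \<in> carrier_mat 4 4" and cGl: "Gl \<in> carrier_mat 4 4" unfolding E_def Gl_def by auto
  have "E * Gl * E\<^sup>T = mat 4 4 (\<lambda>(i, j). eta4 i j)"
  proof (rule eq_matI)
    fix i j assume "i < dim_row (mat 4 4 (\<lambda>(i, j). eta4 i j))" "j < dim_col (mat 4 4 (\<lambda>(i, j). eta4 i j))"
    then have i: "i < 4" and j: "j < 4" by auto
    have "E * Gl * E\<^sup>T = mat 4 4 (\<lambda>(i, j). \<Sum>k<4. e i k * gl k j) * mat 4 4 (\<lambda>(i, j). e j i)"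
      by (intro arg_cong2[where f = "(*)"] eq_matI) (auto simp: E_def Gl_def scalar_prod_def atLeast0LessThan)
    then have "(E * Gl * E\<^sup>T) $$ (i, j) = (\<Sum>b<4. (\<Sum>a<4. e i a * gl a b) * e j b)"
      using i j by (simp add: scalar_prod_def atLeast0LessThan)
    also have "\<dots> = (\<Sum>a<4. \<Sum>b<4. e i a * e j b * gl a b)"
      by (subst sum.swap) (simp add: sum_distrib_left sum_distrib_right mult_ac)
    finally show "(E * Gl * E\<^sup>T) $$ (i, j) = mat 4 4 (\<lambda>(i, j). eta4 i j) $$ (i, j)"
      using e i j by simp
  qed (auto simp: E_def)
  then have "det (E * Gl * E\<^sup>T) = -1"
    by (simp add: det_mat_4 perm_alt_sum4_def eta4_def)
  moreover have "det (E * Gl * E\<^sup>T) = det E * det Gl * det E"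
    using cE cGl by (subst det_mult[of _ 4]) (auto simp: det_mult[OF cE cGl] det_transpose[OF cE])
  ultimately have "(det E)^2 * det Gl = -1" by (simp add: power2_eq_square mult_ac)
  then show ?thesis
    unfolding metric_det_def Gl_def[symmetric]
    using mult_nonneg_nonneg[of "(det E)^2" "det Gl"] by force
qed

section \<open>Contractions of the field and its dual\<close>

lemma contr_commute:
  assumes "sym4 gu"
  shows "contr gu X Y = contr gu Y X"
proof -
  have "contr gu X Y = (\<Sum>a<4. \<Sum>b<4. X a * gu a b * Y b)"
    unfolding contr_def raise1_def by (simp add: sum_distrib_left mult.assoc)
  also have "\<dots> = (\<Sum>b<4. \<Sum>a<4. X a * gu a b * Y b)" by (rule sum.swap)
  also have "\<dots> = (\<Sum>b<4. \<Sum>a<4. Y b * gu b a * X a)"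
    using assms unfolding sym4_def by (intro sum.cong refl) (simp add: mult_ac)
  also have "\<dots> = contr gu Y X"
    unfolding contr_def raise1_def by (simp add: sum_distrib_left mult.assoc)
  finally show ?thesis .
qed

lemma sum_raise2_swap:
  assumes "sym4 gu"
  shows "(\<Sum>a<4. \<Sum>b<4. T a b * raise2 gu S a b) = (\<Sum>a<4. \<Sum>b<4. raise2 gu T a b * S a b)"
proof -
  have "(\<Sum>a<4. \<Sum>b<4. T a b * raise2 gu S a b)
      = (\<Sum>a<4. \<Sum>b<4. \<Sum>c<4. \<Sum>d<4. T a b * gu a c * gu b d * S c d)"
    unfolding raise2_def by (simp add: sum_distrib_left mult.assoc)
  also have "\<dots> = (\<Sum>c<4. \<Sum>d<4. \<Sum>a<4. \<Sum>b<4. T a b * gu a c * gu b d * S c d)"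
    by (rule sum_swap_pairs)
  also have "\<dots> = (\<Sum>c<4. \<Sum>d<4. \<Sum>a<4. \<Sum>b<4. gu c a * gu d b * T a b * S c d)"
    using assms unfolding sym4_def by (intro sum.cong refl) (simp add: mult_ac)
  also have "\<dots> = (\<Sum>a<4. \<Sum>b<4. raise2 gu T a b * S a b)"
    unfolding raise2_def by (simp add: sum_distrib_left sum_distrib_right mult.assoc)
  finally show ?thesis .
qed

lemma raise1_contraction:
  assumes "sym4 gu" and "a < 4"
  shows "raise1 gu (\<lambda>a. \<Sum>b<4. T a b * raise1 gu p b) a = (\<Sum>d<4. raise2 gu T a d * p d)"
proof -
  have "raise1 gu (\<lambda>a. \<Sum>b<4. T a b * raise1 gu p b) a
      = (\<Sum>c<4. \<Sum>b<4. \<Sum>d<4. gu a c * T c b * gu b d * p d)"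
    unfolding raise1_def by (simp add: sum_distrib_left mult.assoc)
  also have "\<dots> = (\<Sum>d<4. \<Sum>c<4. \<Sum>b<4. gu a c * T c b * gu b d * p d)"
    by (rule sum_rotate3)
  also have "\<dots> = (\<Sum>d<4. \<Sum>c<4. \<Sum>b<4. gu a c * gu d b * T c b * p d)"
    using assms unfolding sym4_def by (intro sum.cong refl) (simp add: mult_ac)
  also have "\<dots> = (\<Sum>d<4. raise2 gu T a d * p d)"
    unfolding raise2_def by (simp add: sum_distrib_left sum_distrib_right mult.assoc)
  finally show ?thesis .
qed

lemma antisym4_raise2:
  assumes "antisym4 X"
  shows "antisym4 (raise2 gu X)"
  unfolding antisym4_def
proof (intro allI impI)
  fix a b :: nat assume "a < 4" "b < 4"
  have "raise2 gu X a b = (\<Sum>d<4. \<Sum>c<4. gu a c * gu b d * X c d)"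
    unfolding raise2_def by (rule sum.swap)
  also have "\<dots> = (\<Sum>d<4. \<Sum>c<4. - (gu b d * gu a c * X d c))"
  proof (intro sum.cong refl)
    fix c d assume "c \<in> {..<4::nat}" "d \<in> {..<4::nat}"
    then have "X c d = - X d c" using assms unfolding antisym4_def lessThan_iff by blast
    then show "gu a c * gu b d * X c d = - (gu b d * gu a c * X d c)" by simp
  qed
  also have "\<dots> = - raise2 gu X b a" by (simp add: raise2_def sum_negf)
  finally show "raise2 gu X a b = - raise2 gu X b a" .
qed

lemma antisym4_hodge: "antisym4 (hodge s gl gu Fl)"
  unfolding antisym4_def
proof (intro allI impI)
  fix a b :: nat
  have "hodge s gl gu Fl b a = 1/2 * (\<Sum>c<4. \<Sum>d<4. - (vol_form s gl a b c d * raise2 gu Fl c d))"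
    unfolding hodge_def vol_form_def levi_civita_swap12[of b a] by simp
  then show "hodge s gl gu Fl a b = - hodge s gl gu Fl b a"
    unfolding hodge_def by (simp add: sum_negf)
qed

lemma contr_uvec_self:
  assumes "antisym4 Fl"
  shows "contr gu (uvec gu Fl p) p = 0"
  unfolding contr_def uvec_def by (rule antisym4_quadratic_form[OF assms])

lemma contr_vvec_self: "contr gu (vvec s gl gu Fl p) p = 0"
  unfolding contr_def vvec_def by (rule antisym4_quadratic_form[OF antisym4_hodge])

lemma raise1_uvec:
  assumes "sym4 gu" and "a < 4"
  shows "raise1 gu (uvec gu Fl p) a = (\<Sum>d<4. raise2 gu Fl a d * p d)"
  unfolding uvec_def by (rule raise1_contraction[OF assms])

lemma hodge_levi_civita:
  "hodge s gl gu Fl a b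
     = 1/2 * s * sqrt (- metric_det gl) * (\<Sum>c<4. \<Sum>d<4. levi_civita a b c d * raise2 gu Fl c d)"
  unfolding hodge_def vol_form_def by (simp add: sum_distrib_left mult_ac)

lemma raise2_hodge:
  assumes gu: "sym4 gu" and "a < 4" "e < 4"
  shows "raise2 gu (hodge s gl gu Fl) a e = 1/2 * s * sqrt (- metric_det gl) * det (mat 4 4 (\<lambda>(i, j). gu i j))
     * (\<Sum>g<4. \<Sum>h<4. levi_civita a e g h * Fl g h)"
proof -
  define k where "k = 1/2 * s * sqrt (- metric_det gl)"
  have "raise2 gu (hodge s gl gu Fl) a e = (\<Sum>c<4. \<Sum>b<4. \<Sum>m<4. \<Sum>n<4. \<Sum>g<4. \<Sum>h<4.
      k * (Fl g h * (levi_civita c b m n * (gu a c * gu e b * gu m g * gu n h))))"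
    unfolding raise2_def hodge_def vol_form_def k_def by (simp add: sum_distrib_left sum_distrib_right mult_ac)
  also have "\<dots> = (\<Sum>c<4. \<Sum>b<4. \<Sum>g<4. \<Sum>h<4. \<Sum>m<4. \<Sum>n<4.
      k * (Fl g h * (levi_civita c b m n * (gu a c * gu e b * gu m g * gu n h))))"
    by (intro sum.cong refl sum_swap_pairs)
  also have "\<dots> = (\<Sum>g<4. \<Sum>h<4. \<Sum>c<4. \<Sum>b<4. \<Sum>m<4. \<Sum>n<4.
      k * (Fl g h * (levi_civita c b m n * (gu a c * gu e b * gu m g * gu n h))))"
    by (rule sum_swap_pairs)
  also have "\<dots> = (\<Sum>g<4. \<Sum>h<4. \<Sum>c<4. \<Sum>b<4. \<Sum>m<4. \<Sum>n<4.
      k * (Fl g h * (levi_civita c b m n * (gu a c * gu e b * gu g m * gu h n))))"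
    using gu unfolding sym4_def by (intro sum.cong refl) simp
  also have "\<dots> = (\<Sum>g<4. \<Sum>h<4. k * Fl g h * (\<Sum>c<4. \<Sum>b<4. \<Sum>m<4. \<Sum>n<4.
      levi_civita c b m n * (gu a c * gu e b * gu g m * gu h n)))"
    by (simp add: sum_distrib_left mult_ac)
  also have "\<dots> = (\<Sum>g<4. \<Sum>h<4. k * Fl g h * (det (mat 4 4 (\<lambda>(i, j). gu i j)) * levi_civita a e g h))"
    using assms(2,3) by (intro sum.cong refl) (simp add: levi_civita_transform)
  finally show ?thesis
    unfolding k_def by (simp add: sum_distrib_left mult_ac)
qed

lemma invG_levi_civita:
  assumes "sym4 gu"
  shows "invG s gl gu Fl = - (1/8) * s * sqrt (- metric_det gl)
    * (\<Sum>a<4. \<Sum>b<4. \<Sum>c<4. \<Sum>d<4. levi_civita a b c d * raise2 gu Fl a b * raise2 gu Fl c d)"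
proof -
  have "invG s gl gu Fl = - (1/4) * (\<Sum>a<4. \<Sum>b<4. raise2 gu Fl a b * hodge s gl gu Fl a b)"
    unfolding invG_def using sum_raise2_swap[OF assms] by simp
  then show ?thesis
    unfolding hodge_levi_civita by (simp add: sum_distrib_left mult_ac)
qed

lemma contr_uvec_vvec:
  assumes gu: "sym4 gu" and F: "antisym4 Fl"
  shows "contr gu (uvec gu Fl p) (vvec s gl gu Fl p) = - invG s gl gu Fl * contr gu p p"
proof -
  define Fu where "Fu = raise2 gu Fl"
  have "contr gu (uvec gu Fl p) (vvec s gl gu Fl p) = contr gu (vvec s gl gu Fl p) (uvec gu Fl p)"
    by (rule contr_commute[OF gu])
  also have "\<dots> = (\<Sum>a<4. vvec s gl gu Fl p a * (\<Sum>d<4. Fu a d * p d))"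
    unfolding contr_def Fu_def by (intro sum.cong refl) (simp add: raise1_uvec[OF gu])
  also have "\<dots> = 1/2 * s * sqrt (- metric_det gl) * (\<Sum>a<4.
      (\<Sum>b<4. \<Sum>c<4. \<Sum>d<4. levi_civita a b c d * Fu c d * raise1 gu p b) * (\<Sum>e<4. Fu a e * p e))"
    unfolding vvec_def hodge_levi_civita Fu_def
    by (simp add: sum_distrib_left sum_distrib_right sum_divide_distrib mult_ac)
  also have "\<dots> = 1/2 * s * sqrt (- metric_det gl) * (1/4
      * (\<Sum>a<4. \<Sum>b<4. \<Sum>c<4. \<Sum>d<4. levi_civita a b c d * Fu a b * Fu c d) * contr gu p p)"
    using levi_civita_dual_contraction[OF antisym4_raise2[OF F], of gu "raise1 gu p" p]
    unfolding contr_def Fu_def by simp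
  finally show ?thesis
    unfolding invG_levi_civita[OF gu] Fu_def by simp
qed

lemma contr_vvec_vvec:
  assumes lor: "lorentzian gl" and inv: "is_inverse_metric gl gu"
    and s: "s = 1 \<or> s = -1" and F: "antisym4 Fl"
  shows "contr gu (vvec s gl gu Fl p) (vvec s gl gu Fl p)
    = contr gu (uvec gu Fl p) (uvec gu Fl p) - invF gu Fl * contr gu p p"
proof -
  have gu: "sym4 gu" by (rule inverse_metric_sym[OF lor inv])
  define Fu where "Fu = raise2 gu Fl"
  define r where "r = sqrt (- metric_det gl)"
  define dG where "dG = det (mat 4 4 (\<lambda>(i, j). gu i j))"
  define W where "W a = (\<Sum>b<4. \<Sum>c<4. \<Sum>d<4. levi_civita a b c d * Fu c d * raise1 gu p b)" for a
  define W' where "W' a = (\<Sum>e<4. \<Sum>g<4. \<Sum>h<4. levi_civita a e g h * Fl g h * p e)" for a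
  have rr_dG: "s^2 * (r^2 * dG) = -1"
    using s lorentzian_metric_det_neg[OF lor] metric_det_inverse[OF inv]
    unfolding r_def dG_def by auto
  have v: "vvec s gl gu Fl p a = 1/2 * s * r * W a" for a
    unfolding vvec_def hodge_levi_civita W_def r_def Fu_def
    by (simp add: sum_distrib_left sum_distrib_right sum_divide_distrib mult_ac)
  have v_raised: "raise1 gu (vvec s gl gu Fl p) a = 1/2 * s * r * dG * W' a" if "a < 4" for a
    unfolding vvec_def raise1_contraction[OF gu that] W'_def r_def dG_def
    using that by (simp add: raise2_hodge[OF gu] sum_distrib_left sum_distrib_right sum_divide_distrib mult_ac)
  have WW': "(\<Sum>a<4. W a * W' a) = - 4 * (\<Sum>a<4. (\<Sum>b<4. Fl a b * raise1 gu p b) * (\<Sum>c<4. Fu a c * p c))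
      + 2 * (\<Sum>a<4. \<Sum>b<4. Fl a b * Fu a b) * (\<Sum>a<4. p a * raise1 gu p a)"
    using levi_civita_double_dual_contraction[OF antisym4_raise2[OF F] F, of gu "raise1 gu p" p]
    unfolding W_def W'_def Fu_def by linarith
  have uu: "contr gu (uvec gu Fl p) (uvec gu Fl p)
      = (\<Sum>a<4. (\<Sum>b<4. Fl a b * raise1 gu p b) * (\<Sum>c<4. Fu a c * p c))"
    unfolding contr_def Fu_def by (intro sum.cong refl) (simp add: uvec_def[of gu Fl p] raise1_uvec[OF gu])
  have "contr gu (vvec s gl gu Fl p) (vvec s gl gu Fl p) = 1/4 * (s^2 * (r^2 * dG)) * (\<Sum>a<4. W a * W' a)"
    unfolding contr_def by (simp add: v v_raised sum_distrib_left power2_eq_square mult_ac)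
  then show ?thesis
    unfolding rr_dG WW' uu unfolding invF_def contr_def Fu_def by (simp add: algebra_simps)
qed

section \<open>The characteristic polynomial\<close>

lemma sum_raise1_contr:
  "(\<Sum>k<4. (\<alpha> * raise1 gu Y k) * X k) = \<alpha> * contr gu X Y"
  "(\<Sum>k<4. (\<alpha> * raise1 gu Y k - \<beta> * raise1 gu Z k) * X k) = \<alpha> * contr gu X Y - \<beta> * contr gu X Z"
  unfolding contr_def by (simp_all add: sum_subtractf sum_distrib_left algebra_simps)

lemma char_poly_Mmap:
  fixes gl gu Fl :: "nat \<Rightarrow> nat \<Rightarrow> real" and p :: "nat \<Rightarrow> real" and s LF LFF LFG LGG :: real
  assumes gu: "sym4 gu" and F: "antisym4 Fl"
  defines "u \<equiv> uvec gu Fl p" and "v \<equiv> vvec s gl gu Fl p"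
  defines "pp \<equiv> contr gu p p" and "uu \<equiv> contr gu u u" and "uv \<equiv> contr gu u v" and "vv \<equiv> contr gu v v"
  shows "char_poly (Mmap LF LFF LFG LGG s gl gu Fl p) = [:2*LF*pp, 1:] * [:0, 1:] *
     ([:2*LF*pp + 4*LFF*uu - 2*LFG*uv, 1:] * [:2*LF*pp - 2*LFG*uv + LGG*vv, 1:]
      - [:(2*LFG*vv - 4*LFF*uv) * (2*LFG*uu - LGG*uv):])"
proof -
  have up: "contr gu u p = 0" and pu: "contr gu p u = 0"
    using contr_uvec_self[OF F] contr_commute[OF gu, of p u] unfolding u_def by simp_all
  have vp: "contr gu v p = 0" and pv: "contr gu p v = 0"
    using contr_vvec_self contr_commute[OF gu, of p v] unfolding v_def by simp_all
  have vu: "contr gu v u = uv"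
    unfolding uv_def by (rule contr_commute[OF gu])
  define c where "c = -2*LF*pp"
  define A where "A = mat 4 3 (\<lambda>(i, j). ([p, u, v] ! j) i)"
  define K where "K = mat 3 4 (\<lambda>(j, k). [2*LF * raise1 gu p k,
      2*LFG * raise1 gu v k - 4*LFF * raise1 gu u k, 2*LFG * raise1 gu u k - LGG * raise1 gu v k] ! j)"
  have A: "A \<in> carrier_mat 4 3" and K: "K \<in> carrier_mat 3 4" unfolding A_def K_def by auto
  have M: "Mmap LF LFF LFG LGG s gl gu Fl p = c \<cdot>\<^sub>m 1\<^sub>m 4 + A * K"
    by (rule eq_matI) (auto simp: Mmap_def Let_def A_def K_def c_def pp_def u_def v_def
        scalar_prod_def atLeast0LessThan sum_lessThan_3 algebra_simps)
  \<comment> \<open>The zeros in the first row and column are the orthogonality of \<open>u\<close> and \<open>v\<close> to \<open>p\<close>.\<close>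
  define B where "B = [[2*LF*pp, 0, 0], [0, 2*LFG*uv - 4*LFF*uu, 2*LFG*vv - 4*LFF*uv],
      [0, 2*LFG*uu - LGG*uv, 2*LFG*uv - LGG*vv]]"
  have KA: "K * A = mat 3 3 (\<lambda>(i, j). B ! i ! j)"
    by (rule eq_matI) (use A K in \<open>auto simp: K_def A_def B_def scalar_prod_def atLeast0LessThan
        sum_raise1_contr up vp pu pv vu less_Suc_eq numeral_3_eq_3
        pp_def[symmetric] uu_def[symmetric] uv_def[symmetric] vv_def[symmetric]\<close>)
  have "poly (char_poly (Mmap LF LFF LFG LGG s gl gu Fl p)) x = poly ([:2*LF*pp, 1:] * [:0, 1:] *
     ([:2*LF*pp + 4*LFF*uu - 2*LFG*uv, 1:] * [:2*LF*pp - 2*LFG*uv + LGG*vv, 1:]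
      - [:(2*LFG*vv - 4*LFF*uv) * (2*LFG*uu - LGG*uv):])) x" if "x \<noteq> c" for x
  proof -
    have "poly (char_poly (Mmap LF LFF LFG LGG s gl gu Fl p)) x = det (x \<cdot>\<^sub>m 1\<^sub>m 4 - (c \<cdot>\<^sub>m 1\<^sub>m 4 + A * K))"
      unfolding M by (rule poly_char_poly_det) (use A K in auto)
    also have "\<dots> = (x - c) * det ((x - c) \<cdot>\<^sub>m 1\<^sub>m 3 - K * A)"
      using det_scalar_plus_low_rank[OF A K that] by simp
    finally show ?thesis
      unfolding KA B_def det_scalar_minus_block_diag3 by (simp add: c_def algebra_simps)
  qed
  then show ?thesis by (rule poly_eqI_cofinite)
qed

lemma poly_char_poly_of_real_Mmap:
  fixes gl gu Fl :: "nat \<Rightarrow> nat \<Rightarrow> real" and p :: "nat \<Rightarrow> real" and s LF LFF LFG LGG :: real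
    and x :: complex
  assumes gu: "sym4 gu" and F: "antisym4 Fl"
  defines "u \<equiv> uvec gu Fl p" and "v \<equiv> vvec s gl gu Fl p"
  defines "P \<equiv> complex_of_real (contr gu p p)" and "U \<equiv> complex_of_real (contr gu u u)"
    and "UV \<equiv> complex_of_real (contr gu u v)" and "VV \<equiv> complex_of_real (contr gu v v)"
  defines "L \<equiv> complex_of_real LF" and "L1 \<equiv> complex_of_real LFF"
    and "L2 \<equiv> complex_of_real LFG" and "L3 \<equiv> complex_of_real LGG"
  shows "poly (char_poly (map_mat complex_of_real (Mmap LF LFF LFG LGG s gl gu Fl p))) x
    = (x + 2*L*P) * x * ((x + 2*L*P + 4*L1*U - 2*L2*UV) * (x + 2*L*P - 2*L2*UV + L3*VV)
        - (2*L2*VV - 4*L1*UV) * (2*L2*U - L3*UV))"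
proof -
  have "Mmap LF LFF LFG LGG s gl gu Fl p \<in> carrier_mat 4 4" by (simp add: Mmap_def Let_def)
  show ?thesis
    unfolding of_real_hom.char_poly_hom[OF \<open>_ \<in> carrier_mat 4 4\<close>] char_poly_Mmap[OF gu F]
    by (simp add: hom_distribs assms algebra_simps)
qed

lemma sigma_pm_root:
  assumes "Mco LF LFF LFG LGG F G \<noteq> 0" and "e = 1 \<or> e = -1"
  defines "\<sigma> \<equiv> sigma_pm e LF LFF LFG LGG F G"
  shows "of_real (Mco LF LFF LFG LGG F G) * \<sigma>^2 - of_real (Nco LF LFF LFG LGG F) * \<sigma>
    + of_real (Pco LFF LFG LGG) = 0"
proof -
  define m n q :: complex where "m = of_real (Mco LF LFF LFG LGG F G)"
    and "n = of_real (Nco LF LFF LFG LGG F)" and "q = of_real (Pco LFF LFG LGG)"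
  have "m \<noteq> 0" using assms(1) unfolding m_def by simp
  have "(complex_of_real e)^2 = 1" using assms(2) by auto
  then have "(\<sigma> - n / (2*m))^2 = n^2 / (4*m^2) - q / m"
    unfolding \<sigma>_def sigma_pm_def m_def n_def q_def Let_def by (simp add: power_mult_distrib)
  then have "4 * m * (m * \<sigma>^2 - n * \<sigma> + q) = 0"
    using \<open>m \<noteq> 0\<close> by (simp add: field_simps power2_eq_square)
  then show ?thesis
    using \<open>m \<noteq> 0\<close> unfolding m_def n_def q_def by simp
qed

lemma dispersion_factorisation:
  fixes LF LFF LFG LGG F G :: real and x \<sigma> P U UV VV :: complex
  defines "L \<equiv> complex_of_real LF" and "L1 \<equiv> complex_of_real LFF"
    and "L2 \<equiv> complex_of_real LFG" and "L3 \<equiv> complex_of_real LGG"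
  assumes P: "P = - \<sigma> * U" and UV: "UV = - of_real G * P" and VV: "VV = U - of_real F * P"
    and \<sigma>: "of_real (Mco LF LFF LFG LGG F G) * \<sigma>^2 - of_real (Nco LF LFF LFG LGG F) * \<sigma>
      + of_real (Pco LFF LFG LGG) = 0"
  shows "(x + 2*L*P) * x * ((x + 2*L*P + 4*L1*U - 2*L2*UV) * (x + 2*L*P - 2*L2*UV + L3*VV)
        - (2*L2*VV - 4*L1*UV) * (2*L2*U - L3*UV))
    = x^2 * (x - 2*L*\<sigma>*U) * (x - (4*L*\<sigma> - 4*L1 + 4*L2*of_real G*\<sigma> - L3*(1 + of_real F*\<sigma>))*U)"
proof -
  have "(x + 2*L*P) * x * ((x + 2*L*P + 4*L1*U - 2*L2*UV) * (x + 2*L*P - 2*L2*UV + L3*VV)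
        - (2*L2*VV - 4*L1*UV) * (2*L2*U - L3*UV))
      - x^2 * (x - 2*L*\<sigma>*U) * (x - (4*L*\<sigma> - 4*L1 + 4*L2*of_real G*\<sigma> - L3*(1 + of_real F*\<sigma>))*U)
    = x * (x - 2*L*\<sigma>*U) * 4 * U^2 * (of_real (Mco LF LFF LFG LGG F G) * \<sigma>^2
        - of_real (Nco LF LFF LFG LGG F) * \<sigma> + of_real (Pco LFF LFG LGG))"
    unfolding UV VV P L_def L1_def L2_def L3_def Mco_def Nco_def Pco_def
    by (simp add: algebra_simps power2_eq_square)
  then show ?thesis unfolding \<sigma> by simp
qed

theorem proposition2:
  fixes gl gu Fl :: "nat \<Rightarrow> nat \<Rightarrow> real" and p :: "nat \<Rightarrow> real"
    and s e LF LFF LFG LGG :: real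
  assumes g_lor: "lorentzian gl"
    and g_inv: "is_inverse_metric gl gu"
    and orient: "s = 1 \<or> s = -1"
    and F_anti: "\<forall>a<4. \<forall>b<4. Fl a b = - Fl b a"
    and p_nz: "\<exists>a<4. p a \<noteq> 0"
    and LF_nz: "LF \<noteq> 0"
    and M_nz: "Mco LF LFF LFG LGG (invF gu Fl) (invG s gl gu Fl) \<noteq> 0"
    and std: "\<forall>e'\<in>{1, -1}.
       1 + sigma_pm e' LF LFF LFG LGG (invF gu Fl) (invG s gl gu Fl) * complex_of_real (invF gu Fl)
         - (sigma_pm e' LF LFF LFG LGG (invF gu Fl) (invG s gl gu Fl))\<^sup>2
           * complex_of_real ((invG s gl gu Fl)\<^sup>2) \<noteq> 0"
    and e_pm: "e = 1 \<or> e = -1"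
    and disp: "complex_of_real (contr gu p p)
       + sigma_pm e LF LFF LFG LGG (invF gu Fl) (invG s gl gu Fl)
         * complex_of_real (contr gu (uvec gu Fl p) (uvec gu Fl p)) = 0"
  shows "let sig = sigma_pm e LF LFF LFG LGG (invF gu Fl) (invG s gl gu Fl);
             F = complex_of_real (invF gu Fl);
             G = complex_of_real (invG s gl gu Fl);
             uu = complex_of_real (contr gu (uvec gu Fl p) (uvec gu Fl p));
             lam3 = 2 * complex_of_real LF * sig * uu;
             lam4 = (4 * complex_of_real LF * sig - 4 * complex_of_real LFF
                   + 4 * complex_of_real LFG * G * sig
                   - complex_of_real LGG * (1 + F * sig)) * uu
         in char_poly (map_mat complex_of_real (Mmap LF LFF LFG LGG s gl gu Fl p))
              = [:0, 0, 1:] * [:- lam3, 1:] * [:- lam4, 1:]"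
proof -
  define F G \<sigma> where "F = invF gu Fl" and "G = invG s gl gu Fl" and "\<sigma> = sigma_pm e LF LFF LFG LGG F G"
  define u v where "u = uvec gu Fl p" and "v = vvec s gl gu Fl p"
  have gu: "sym4 gu" by (rule inverse_metric_sym[OF g_lor g_inv])
  have Fl: "antisym4 Fl" using F_anti unfolding antisym4_def .
  have P: "complex_of_real (contr gu p p) = - \<sigma> * complex_of_real (contr gu u u)"
    using disp unfolding u_def \<sigma>_def F_def G_def by (simp add: eq_neg_iff_add_eq_0)
  have UV: "complex_of_real (contr gu u v) = - of_real G * complex_of_real (contr gu p p)"
    unfolding u_def v_def G_def contr_uvec_vvec[OF gu Fl] by simp
  have VV: "complex_of_real (contr gu v v)
      = complex_of_real (contr gu u u) - of_real F * complex_of_real (contr gu p p)"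
    unfolding u_def v_def F_def contr_vvec_vvec[OF g_lor g_inv orient Fl] by simp
  have char: "poly (char_poly (map_mat complex_of_real (Mmap LF LFF LFG LGG s gl gu Fl p))) x
      = x^2 * (x - 2 * complex_of_real LF * \<sigma> * complex_of_real (contr gu u u))
        * (x - (4 * complex_of_real LF * \<sigma> - 4 * complex_of_real LFF + 4 * complex_of_real LFG * complex_of_real G * \<sigma>
            - complex_of_real LGG * (1 + complex_of_real F * \<sigma>)) * complex_of_real (contr gu u u))" for x
    unfolding poly_char_poly_of_real_Mmap[OF gu Fl] u_def[symmetric] v_def[symmetric]
    by (rule dispersion_factorisation[OF P UV VV sigma_pm_root[OF M_nz e_pm, folded F_def G_def, folded \<sigma>_def]])
  show ?thesis
    unfolding Let_def F_def[symmetric] G_def[symmetric] \<sigma>_def[symmetric] u_def[symmetric]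
    by (intro poly_ext) (simp add: char power2_eq_square algebra_simps)
qed

end
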